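(* Let $\delta:\,]0,+\infty[\to\mathbb R$ be continuously differentiable, nonnegative and bounded. Then for every $r_A,r_B>0$ and every $T>0$ there exists a unique solution $r:[-T,0]\to\,]0,+\infty[$ of $\ddot r+\delta(r)\dot r=-1/r^2$ with $r(-T)=r_A$ and $r(0)=r_B$. *)

theory Defs
  imports "HOL-Analysis.Analysis"
begin

definition bvp_solution ::
  "(real \<Rightarrow> real) \<Rightarrow> real \<Rightarrow> real \<Rightarrow> real \<Rightarrow> (real \<Rightarrow> real) \<Rightarrow> bool" where
  "bvp_solution \<delta> T rA rB r \<longleftrightarrow>
     (\<forall>t\<in>{-T..0}. r t > 0) \<and> r (-T) = rA \<and> r 0 = rB \<and>
     (\<exists>r' r''. \<forall>t\<in>{-T..0}.
        (r has_real_derivative r' t) (at t within {-T..0}) \<and>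
        (r' has_real_derivative r'' t) (at t within {-T..0}) \<and>
        r'' t + \<delta> (r t) * r' t = - 1 / (r t)^2)"

end

theory Submission
  imports Defs
begin

text \<open>With a primitive \<open>D\<close> of \<open>\<delta>\<close> and the momentum \<open>p = r' + D(r)\<close>, the equation becomes the
  system \<open>r' = p - D(r)\<close>, \<open>p' = -1/r\<^sup>2\<close>.

  Uniqueness is a comparison argument. If two solutions had \<open>w = r\<^sub>1 - r\<^sub>2 > 0\<close> somewhere,
  at an interior maximum of \<open>w\<close> the momentum difference \<open>u = p\<^sub>1 - p\<^sub>2\<close> equals
  \<open>D(r\<^sub>1) - D(r\<^sub>2) \<ge> 0\<close>. While \<open>w > 0\<close>, \<open>u\<close> is nondecreasing because \<open>1/r\<^sub>1\<^sup>2 < 1/r\<^sub>2\<^sup>2\<close>, and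
  \<open>D(r\<^sub>1) - D(r\<^sub>2) \<le> M w\<close> for a bound \<open>M\<close> of \<open>\<delta>\<close>; so \<open>w' \<ge> -M w\<close>, \<open>e\<^sup>M\<^sup>t w\<close> is nondecreasing and \<open>w\<close>
  cannot come back to \<open>0\<close> at the right endpoint.

  Existence is by shooting. Cutting \<open>r\<close> off below at \<open>m = min rA rB\<close> makes the system
  globally Lipschitz, so it has a flow on \<open>[-T, 0]\<close> that depends continuously on the initial
  momentum \<open>v\<close> (a Banach fixed point in a Bielecki norm). The endpoint value \<open>r(0)\<close> is at most
  \<open>rB\<close> for small \<open>v\<close> and at least \<open>rB\<close> for large \<open>v\<close>, so some \<open>v\<close> hits \<open>rB\<close>. Since \<open>p\<close> is
  nonincreasing and \<open>D\<close> is monotone, \<open>r' \<le> 0\<close> after an interior minimum of \<open>r\<close>; hence \<open>r\<close> is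
  minimal at an endpoint, \<open>r \<ge> m\<close>, and the cut-off never acts.\<close>


section \<open>Calculus on compact intervals\<close>

lemma increment_ge_of_deriv_ge:
  fixes f f' :: "real \<Rightarrow> real"
  assumes "s \<le> t"
    and deriv: "\<And>x. x \<in> {s..t} \<Longrightarrow> (f has_real_derivative f' x) (at x within {s..t})"
    and bound: "\<And>x. x \<in> {s<..<t} \<Longrightarrow> k \<le> f' x"
  shows "k * (t - s) \<le> f t - f s"
proof (cases "s = t")
  case False
  with \<open>s \<le> t\<close> have "s < t" by simp
  then obtain x where "x \<in> {s<..<t}" "f t - f s = f' x * (t - s)"
    using mvt_simple[of s t f "\<lambda>x h. f' x * h"] deriv
    by (auto simp: has_field_derivative_def mult.commute[of _ "f' _"])
  with bound[of x] \<open>s < t\<close> show ?thesis by (simp add: mult_right_mono)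
qed simp

lemma increment_le_of_deriv_le:
  fixes f f' :: "real \<Rightarrow> real"
  assumes "s \<le> t"
    and "\<And>x. x \<in> {s..t} \<Longrightarrow> (f has_real_derivative f' x) (at x within {s..t})"
    and "\<And>x. x \<in> {s<..<t} \<Longrightarrow> f' x \<le> k"
  shows "f t - f s \<le> k * (t - s)"
proof -
  have "- k * (t - s) \<le> - f t - - f s"
    by (rule increment_ge_of_deriv_ge[of s t "\<lambda>x. - f x" "\<lambda>x. - f' x"]) (use assms in \<open>auto intro: DERIV_minus\<close>)
  then show ?thesis by simp
qed

lemma deriv_zero_at_interior_extremum:
  fixes f :: "real \<Rightarrow> real"
  assumes "(f has_real_derivative f') (at x within {s..t})" "x \<in> {s<..<t}"
    and "(\<forall>y\<in>{s..t}. f y \<le> f x) \<or> (\<forall>y\<in>{s..t}. f x \<le> f y)"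
  shows "f' = 0"
proof -
  have "(f has_real_derivative f') (at x)"
    using assms(1,2) at_within_Icc_at[of s x t] by simp
  moreover have "0 < min (x - s) (t - x)" using assms(2) by simp
  moreover have "\<bar>x - y\<bar> < min (x - s) (t - x) \<Longrightarrow> y \<in> {s..t}" for y by auto
  ultimately show ?thesis
    using assms(3) DERIV_local_max[of f f' x] DERIV_local_min[of f f' x] by metis
qed

lemma first_nonpos_point:
  fixes f :: "real \<Rightarrow> real"
  assumes "s \<le> t" "continuous_on {s..t} f" "f t \<le> 0"
  obtains t1 where "t1 \<in> {s..t}" "f t1 \<le> 0" "\<And>x. s \<le> x \<Longrightarrow> x < t1 \<Longrightarrow> 0 < f x"
proof -
  define S where "S = {s..t} \<inter> f -` {..0}"
  have "closed S" unfolding S_def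
    using assms(2) by (rule continuous_closed_preimage) auto
  moreover have "t \<in> S" "bdd_below S" using assms by (auto simp: S_def)
  ultimately have "Inf S \<in> S" using closed_contains_Inf by blast
  moreover have "0 < f x" if "s \<le> x" "x < Inf S" for x
    using cInf_lower[OF _ \<open>bdd_below S\<close>, of x] that \<open>Inf S \<in> S\<close> by (force simp: S_def)
  ultimately show thesis using that by (auto simp: S_def)
qed

lemma last_nonpos_point:
  fixes f :: "real \<Rightarrow> real"
  assumes "s \<le> t" "continuous_on {s..t} f" "f s \<le> 0"
  obtains t1 where "t1 \<in> {s..t}" "f t1 \<le> 0" "\<And>x. t1 < x \<Longrightarrow> x \<le> t \<Longrightarrow> 0 < f x"
proof -
  define S where "S = {s..t} \<inter> f -` {..0}"
  have "closed S" unfolding S_def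
    using assms(2) by (rule continuous_closed_preimage) auto
  moreover have "s \<in> S" "bdd_above S" using assms by (auto simp: S_def)
  ultimately have "Sup S \<in> S" using closed_contains_Sup by blast
  moreover have "0 < f x" if "Sup S < x" "x \<le> t" for x
    using cSup_upper[OF _ \<open>bdd_above S\<close>, of x] that \<open>Sup S \<in> S\<close> by (force simp: S_def)
  ultimately show thesis using that by (auto simp: S_def)
qed

lemma min_or_linear_growth:
  fixes f f' :: "real \<Rightarrow> real"
  assumes "s \<le> t"
    and deriv: "\<And>x. x \<in> {s..t} \<Longrightarrow> (f has_real_derivative f' x) (at x within {s..t})"
    and grow: "\<And>x. x \<in> {s<..<t} \<Longrightarrow> f x < c \<Longrightarrow> k \<le> f' x" and "0 \<le> k"
  shows "min c (f s + k * (t - s)) \<le> f t"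
proof (cases "\<exists>x\<in>{s..t}. c \<le> f x")
  case True
  then obtain x0 where x0: "x0 \<in> {s..t}" "c \<le> f x0" by blast
  have deriv': "(f has_real_derivative f' x) (at x within {x0..t})" if "x \<in> {x0..t}" for x
    using \<open>x0 \<in> {s..t}\<close> that by (intro DERIV_subset[OF deriv]) auto
  then have "continuous_on {x0..t} (\<lambda>x. c - f x)"
    by (intro continuous_intros DERIV_continuous_on[of _ _ f'])
  then obtain t1 where t1: "t1 \<in> {x0..t}" "c \<le> f t1" "\<And>x. t1 < x \<Longrightarrow> x \<le> t \<Longrightarrow> f x < c"
    using last_nonpos_point[of x0 t "\<lambda>x. c - f x"] x0 by auto
  have "0 * (t - t1) \<le> f t - f t1"
  proof (rule increment_ge_of_deriv_ge[of t1 t f f'])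
    show "(f has_real_derivative f' x) (at x within {t1..t})" if "x \<in> {t1..t}" for x
      using t1(1) that by (intro DERIV_subset[OF deriv']) auto
    show "0 \<le> f' x" if "x \<in> {t1<..<t}" for x
      using t1 that \<open>x0 \<in> {s..t}\<close> \<open>0 \<le> k\<close> grow[of x] by auto
  qed (use t1(1) in auto)
  with t1(2) show ?thesis by simp
next
  case False
  have "k * (t - s) \<le> f t - f s"
  proof (rule increment_ge_of_deriv_ge[OF \<open>s \<le> t\<close> deriv])
    show "k \<le> f' x" if "x \<in> {s<..<t}" for x
      using False that by (intro grow[OF that]) (auto simp: not_le dest!: bspec[of _ _ x])
  qed
  then show ?thesis by simp
qed

lemma exp_weighted_increasing:
  fixes w w' :: "real \<Rightarrow> real"
  assumes "s \<le> t"
    and deriv: "\<And>x. x \<in> {s..t} \<Longrightarrow> (w has_real_derivative w' x) (at x within {s..t})"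
    and bound: "\<And>x. x \<in> {s<..<t} \<Longrightarrow> - M * w x \<le> w' x"
  shows "w s * exp (M * s) \<le> w t * exp (M * t)"
proof -
  have "0 * (t - s) \<le> w t * exp (M * t) - w s * exp (M * s)"
  proof (rule increment_ge_of_deriv_ge[OF \<open>s \<le> t\<close>])
    show "((\<lambda>x. w x * exp (M * x)) has_real_derivative (w' x + M * w x) * exp (M * x))
        (at x within {s..t})" if "x \<in> {s..t}" for x
      using deriv[OF that] by (auto intro!: derivative_eq_intros simp: algebra_simps)
    show "0 \<le> (w' x + M * w x) * exp (M * x)" if "x \<in> {s<..<t}" for x
      using bound[OF that] by simp
  qed
  then show ?thesis by simp
qed

lemma min_at_endpoint:
  fixes r p h :: "real \<Rightarrow> real"
  assumes "s \<le> t" "mono h"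
    and deriv: "\<And>x. x \<in> {s..t} \<Longrightarrow> (r has_real_derivative p x - h (r x)) (at x within {s..t})"
    and p_antimono: "\<And>x y. x \<in> {s..t} \<Longrightarrow> y \<in> {s..t} \<Longrightarrow> x \<le> y \<Longrightarrow> p y \<le> p x"
    and "x \<in> {s..t}"
  shows "min (r s) (r t) \<le> r x"
proof -
  have "continuous_on {s..t} r" using deriv by (rule DERIV_continuous_on)
  then obtain t0 where t0: "t0 \<in> {s..t}" "\<And>y. y \<in> {s..t} \<Longrightarrow> r t0 \<le> r y"
    using continuous_attains_inf[of "{s..t}" r] \<open>s \<le> t\<close> by auto
  have "r t \<le> r t0" if interior: "t0 \<in> {s<..<t}"
  proof -
    have "p t0 - h (r t0) = 0"
      using t0 by (intro deriv_zero_at_interior_extremum[OF deriv[OF t0(1)] interior]) auto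
    then have "r t - r t0 \<le> 0 * (t - t0)"
    proof (intro increment_le_of_deriv_le[of t0 t r "\<lambda>x. p x - h (r x)"])
      show "(r has_real_derivative p x - h (r x)) (at x within {t0..t})" if "x \<in> {t0..t}" for x
        using t0(1) that by (intro DERIV_subset[OF deriv]) auto
      show "p x - h (r x) \<le> 0" if "x \<in> {t0<..<t}" for x
        using p_antimono[of t0 x] monoD[OF \<open>mono h\<close> t0(2)[of x]] t0(1) that
          \<open>p t0 - h (r t0) = 0\<close> by auto
    qed (use t0(1) in auto)
    then show ?thesis by simp
  qed
  then have "min (r s) (r t) \<le> r t0"
    using t0(1) by (cases "t0 = s \<or> t0 = t") auto
  with t0(2)[OF \<open>x \<in> {s..t}\<close>] show ?thesis by simp
qed

text \<open>In the application \<open>w\<close>, \<open>u\<close> and \<open>q\<close> are the differences of the positions, of the momenta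
  and of the values of \<open>D\<close> for two solutions, so that \<open>w' = u - q\<close>.\<close>

lemma comparison_stays_positive:
  fixes w u q u' :: "real \<Rightarrow> real"
  assumes "s \<le> t"
    and dw: "\<And>x. x \<in> {s..t} \<Longrightarrow> (w has_real_derivative u x - q x) (at x within {s..t})"
    and du: "\<And>x. x \<in> {s..t} \<Longrightarrow> (u has_real_derivative u' x) (at x within {s..t})"
    and where_pos: "\<And>x. x \<in> {s..t} \<Longrightarrow> 0 < w x \<Longrightarrow> 0 \<le> q x \<and> q x \<le> M * w x \<and> 0 \<le> u' x"
    and "0 < w s" "q s \<le> u s"
  shows "0 < w t"
proof (rule ccontr)
  assume "\<not> 0 < w t"
  have "continuous_on {s..t} w" using dw by (rule DERIV_continuous_on)
  then obtain t1 where t1: "t1 \<in> {s..t}" "w t1 \<le> 0" "\<And>x. s \<le> x \<Longrightarrow> x < t1 \<Longrightarrow> 0 < w x"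
    using first_nonpos_point[of s t w] \<open>s \<le> t\<close> \<open>\<not> 0 < w t\<close> by auto
  have u_ge: "u s \<le> u x" if "x \<in> {s..t1}" for x
  proof -
    have "0 * (x - s) \<le> u x - u s"
    proof (rule increment_ge_of_deriv_ge)
      show "(u has_real_derivative u' y) (at y within {s..x})" if "y \<in> {s..x}" for y
        using t1(1) \<open>x \<in> {s..t1}\<close> that by (intro DERIV_subset[OF du]) auto
      show "0 \<le> u' y" if "y \<in> {s<..<x}" for y
        using where_pos[of y] t1 \<open>x \<in> {s..t1}\<close> that by auto
    qed (use that in auto)
    then show ?thesis by simp
  qed
  have "w s * exp (M * s) \<le> w t1 * exp (M * t1)"
  proof (rule exp_weighted_increasing[of s t1 w "\<lambda>x. u x - q x"])
    show "(w has_real_derivative u x - q x) (at x within {s..t1})" if "x \<in> {s..t1}" for x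
      using t1(1) that by (intro DERIV_subset[OF dw]) auto
    show "- M * w x \<le> u x - q x" if "x \<in> {s<..<t1}" for x
      using where_pos[of x] where_pos[of s] u_ge[of x] t1 that \<open>0 < w s\<close> \<open>q s \<le> u s\<close> by auto
  qed (use t1(1) in auto)
  with \<open>0 < w s\<close> t1(2) show False
    by (smt (verit) exp_gt_zero mult_nonpos_nonneg mult_pos_pos)
qed

lemma comparison_nonpos:
  fixes w u q u' :: "real \<Rightarrow> real"
  assumes dw: "\<And>x. x \<in> {s..t} \<Longrightarrow> (w has_real_derivative u x - q x) (at x within {s..t})"
    and du: "\<And>x. x \<in> {s..t} \<Longrightarrow> (u has_real_derivative u' x) (at x within {s..t})"
    and where_pos: "\<And>x. x \<in> {s..t} \<Longrightarrow> 0 < w x \<Longrightarrow> 0 \<le> q x \<and> q x \<le> M * w x \<and> 0 \<le> u' x"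
    and "w s \<le> 0" "w t \<le> 0" "x \<in> {s..t}"
  shows "w x \<le> 0"
proof (rule ccontr)
  assume "\<not> w x \<le> 0"
  obtain x0 where x0: "x0 \<in> {s..t}" "\<And>y. y \<in> {s..t} \<Longrightarrow> w y \<le> w x0"
    using continuous_attains_sup[of "{s..t}" w] DERIV_continuous_on[OF dw] \<open>x \<in> {s..t}\<close> by auto
  have "0 < w x0" using x0(2)[OF \<open>x \<in> {s..t}\<close>] \<open>\<not> w x \<le> 0\<close> by simp
  then have "x0 \<in> {s<..<t}" using x0(1) \<open>w s \<le> 0\<close> \<open>w t \<le> 0\<close> by (auto simp: less_le)
  then have "u x0 - q x0 = 0"
    using x0(2) by (intro deriv_zero_at_interior_extremum[OF dw[OF x0(1)]]) auto
  have "0 < w t"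
  proof (rule comparison_stays_positive[of x0 t w u q u' M])
    show "(w has_real_derivative u y - q y) (at y within {x0..t})" if "y \<in> {x0..t}" for y
      using x0(1) that by (intro DERIV_subset[OF dw]) auto
    show "(u has_real_derivative u' y) (at y within {x0..t})" if "y \<in> {x0..t}" for y
      using x0(1) that by (intro DERIV_subset[OF du]) auto
  qed (use where_pos x0(1) \<open>0 < w x0\<close> \<open>u x0 - q x0 = 0\<close> in auto)
  with \<open>w t \<le> 0\<close> show False by simp
qed

lemma continuous_on_compact_pos_lower_bound:
  fixes f :: "'a::topological_space \<Rightarrow> real"
  assumes "compact S" "continuous_on S f" "\<And>x. x \<in> S \<Longrightarrow> 0 < f x"
  obtains c where "0 < c" "\<And>x. x \<in> S \<Longrightarrow> c < f x"
proof (cases "S = {}")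
  case False
  then obtain x0 where "x0 \<in> S" "\<And>x. x \<in> S \<Longrightarrow> f x0 \<le> f x"
    using continuous_attains_inf[OF assms(1) _ assms(2)] by blast
  with assms(3)[of x0] show thesis
    by (intro that[of "f x0 / 2"]) fastforce+
qed (use that[of 1] in simp)

lemma inverse_square_max_lipschitz:
  fixes m x y :: real
  assumes "0 < m"
  shows "\<bar>1 / (max m x)\<^sup>2 - 1 / (max m y)\<^sup>2\<bar> \<le> 2 / m ^ 3 * \<bar>x - y\<bar>"
proof -
  define X Y where "X = max m x" and "Y = max m y"
  have "m \<le> X" "m \<le> Y" "0 < X" "0 < Y" using assms by (auto simp: X_def Y_def)
  have "1 / X\<^sup>2 - 1 / Y\<^sup>2 = (Y - X) * (1 / (X * Y\<^sup>2) + 1 / (X\<^sup>2 * Y))"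
    using \<open>0 < X\<close> \<open>0 < Y\<close> by (simp add: field_simps power2_eq_square)
  then have "\<bar>1 / X\<^sup>2 - 1 / Y\<^sup>2\<bar> = \<bar>X - Y\<bar> * (1 / (X * Y\<^sup>2) + 1 / (X\<^sup>2 * Y))"
    using \<open>0 < X\<close> \<open>0 < Y\<close> by (simp add: abs_mult abs_minus_commute)
  also have "\<dots> \<le> \<bar>x - y\<bar> * (1 / m ^ 3 + 1 / m ^ 3)"
  proof (intro mult_mono add_mono)
    show "\<bar>X - Y\<bar> \<le> \<bar>x - y\<bar>" by (auto simp: X_def Y_def)
    have "m\<^sup>2 \<le> X\<^sup>2" "m\<^sup>2 \<le> Y\<^sup>2"
      using \<open>m \<le> X\<close> \<open>m \<le> Y\<close> assms by (auto intro: power_mono)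
    then have "m * m\<^sup>2 \<le> X * Y\<^sup>2" "m\<^sup>2 * m \<le> X\<^sup>2 * Y"
      using \<open>m \<le> X\<close> \<open>m \<le> Y\<close> assms by (auto intro!: mult_mono)
    then have "m ^ 3 \<le> X * Y\<^sup>2" "m ^ 3 \<le> X\<^sup>2 * Y"
      by (simp_all add: power3_eq_cube power2_eq_square mult_ac)
    then show "1 / (X * Y\<^sup>2) \<le> 1 / m ^ 3" "1 / (X\<^sup>2 * Y) \<le> 1 / m ^ 3"
      using assms \<open>0 < X\<close> \<open>0 < Y\<close> by (auto intro!: divide_left_mono)
  qed (use \<open>0 < X\<close> \<open>0 < Y\<close> in auto)
  finally show ?thesis by (simp add: X_def Y_def mult.commute)
qed

section \<open>A global Picard--Lindelof theorem\<close>

lemma ext_cont_in_bcontfun: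
  fixes f :: "'a::euclidean_space \<Rightarrow> 'b::metric_space"
  assumes "continuous_on (cbox a b) f"
  shows "ext_cont f a b \<in> bcontfun"
  using assms
  by (auto intro!: continuous_on_ext_cont simp: bcontfun_def)
    (auto simp: ext_cont_def intro!: clamp_bounded compact_imp_bounded[OF compact_continuous_image])

lemma fixpoint_dist_le:
  fixes \<Phi> \<Psi> :: "'a::metric_space \<Rightarrow> 'a"
  assumes "\<Phi> p = p" "\<Psi> q = q" "\<And>x y. dist (\<Psi> x) (\<Psi> y) \<le> c * dist x y"
  shows "(1 - c) * dist p q \<le> dist (\<Phi> p) (\<Psi> p)"
proof -
  have "dist p q \<le> dist (\<Phi> p) (\<Psi> p) + dist (\<Psi> p) (\<Psi> q)"
    using dist_triangle[of "\<Phi> p" "\<Psi> q" "\<Psi> p"] assms(1,2) by simp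
  then show ?thesis using assms(3)[of p q] assms(2) by (simp add: algebra_simps)
qed

lemma clamp_real:
  fixes a b t u :: real
  assumes "a \<le> b"
  shows "clamp a b t \<in> {a..b}" and "u \<in> {a..b} \<Longrightarrow> clamp a b u = u"
  using assms clamp_in_interval[of a b t] clamp_cancel_cbox[of u a b] by auto

lemma norm_integral_exp_bound:
  fixes G :: "real \<Rightarrow> 'a::banach"
  assumes "0 < L" "a \<le> u" "continuous_on {a..u} G"
    and bound: "\<And>s. s \<in> {a..u} \<Longrightarrow> norm (G s) \<le> C * exp (L * (s - a))"
  shows "norm (integral {a..u} G) \<le> C * exp (L * (u - a)) / L"
proof -
  have "((\<lambda>s. C * exp (L * (s - a)) / L) has_real_derivative C * exp (L * (s - a))) (at s within {a..u})" for s
    using \<open>0 < L\<close> by (auto intro!: derivative_eq_intros)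
  then have exp_integral: "((\<lambda>s. C * exp (L * (s - a))) has_integral
      C * exp (L * (u - a)) / L - C * exp (L * (a - a)) / L) {a..u}"
    by (intro fundamental_theorem_of_calculus \<open>a \<le> u\<close>)
      (simp add: has_real_derivative_iff_has_vector_derivative)
  have "0 \<le> C" using order_trans[OF norm_ge_zero bound[of a]] \<open>a \<le> u\<close> by simp
  have "norm (integral {a..u} G) \<le> integral {a..u} (\<lambda>s. C * exp (L * (s - a)))"
    by (rule integral_norm_bound_integral[OF integrable_continuous_real[OF assms(3)]
          has_integral_integrable[OF exp_integral] bound])
  also have "\<dots> = C * exp (L * (u - a)) / L - C / L"
    using integral_unique[OF exp_integral] by simp
  also have "\<dots> \<le> C * exp (L * (u - a)) / L"
    using \<open>0 \<le> C\<close> \<open>0 < L\<close> by simp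
  finally show ?thesis .
qed

text \<open>The Picard operator of \<open>X' = F X\<close>, \<open>X a = x0\<close>, conjugated by the weight \<open>e\<^sup>L\<^sup>(\<^sup>t\<^sup>-\<^sup>a\<^sup>)\<close>:
  a bounded continuous \<open>Y\<close> stands for \<open>X t = e\<^sup>L\<^sup>(\<^sup>t\<^sup>-\<^sup>a\<^sup>) Y t\<close> on \<open>[a, b]\<close>, so the sup distance
  of the \<open>Y\<close>'s is the Bielecki distance of the \<open>X\<close>'s.\<close>

definition bielecki_picard ::
  "real \<Rightarrow> real \<Rightarrow> real \<Rightarrow> ('a::banach \<Rightarrow> 'a) \<Rightarrow> 'a \<Rightarrow> (real \<Rightarrow>\<^sub>C 'a) \<Rightarrow> (real \<Rightarrow>\<^sub>C 'a)" where
  "bielecki_picard L a b F x0 Y = Bcontfun (ext_cont (\<lambda>u.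
     (x0 + integral {a..u} (\<lambda>s. F (exp (L * (s - a)) *\<^sub>R Y s))) /\<^sub>R exp (L * (u - a))) a b)"

lemma bielecki_picard_apply:
  fixes F :: "'a::banach \<Rightarrow> 'a"
  assumes "K-lipschitz_on UNIV F"
  shows "bielecki_picard L a b F x0 Y t = (x0 + integral {a..clamp a b t}
           (\<lambda>s. F (exp (L * (s - a)) *\<^sub>R Y s))) /\<^sub>R exp (L * (clamp a b t - a))"
proof -
  have "continuous_on {a..b} (\<lambda>s. F (exp (L * (s - a)) *\<^sub>R Y s))"
    by (rule continuous_on_compose2[OF lipschitz_on_continuous_on[OF assms] _ subset_UNIV])
      (auto intro!: continuous_intros)
  then have "continuous_on {a..b} (\<lambda>u.
      (x0 + integral {a..u} (\<lambda>s. F (exp (L * (s - a)) *\<^sub>R Y s))) /\<^sub>R exp (L * (u - a)))"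
    by (intro continuous_intros indefinite_integral_continuous_1 integrable_continuous_real) auto
  then have "ext_cont (\<lambda>u. (x0 + integral {a..u} (\<lambda>s. F (exp (L * (s - a)) *\<^sub>R Y s)))
      /\<^sub>R exp (L * (u - a))) a b \<in> bcontfun"
    by (intro ext_cont_in_bcontfun) simp
  then show ?thesis
    by (simp only: bielecki_picard_def Bcontfun_inverse) (simp add: ext_cont_def)
qed

lemma bielecki_integral_estimate:
  fixes F :: "'a::banach \<Rightarrow> 'a" and Y Z :: "real \<Rightarrow> 'a"
  assumes lip: "K-lipschitz_on UNIV F" and L: "0 < L" "2 * K \<le> L" and "a \<le> u"
    and cont: "continuous_on {a..u} Y" "continuous_on {a..u} Z"
    and close: "\<And>s. s \<in> {a..u} \<Longrightarrow> norm (Y s - Z s) \<le> d"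
  shows "norm (integral {a..u} (\<lambda>s. F (exp (L * (s - a)) *\<^sub>R Y s) - F (exp (L * (s - a)) *\<^sub>R Z s)))
           / exp (L * (u - a)) \<le> d / 2"
proof -
  let ?e = "\<lambda>s. exp (L * (s - a))"
  have "0 \<le> K" using lip by (rule lipschitz_on_nonneg)
  have "0 \<le> d" using order_trans[OF norm_ge_zero close[of a]] \<open>a \<le> u\<close> by simp
  have cont_F: "continuous_on {a..u} (\<lambda>s. F (?e s *\<^sub>R V s))" if "continuous_on {a..u} V" for V
    by (rule continuous_on_compose2[OF lipschitz_on_continuous_on[OF lip] _ subset_UNIV])
      (intro continuous_intros that)
  have "norm (F (?e s *\<^sub>R Y s) - F (?e s *\<^sub>R Z s)) \<le> (K * d) * ?e s" if "s \<in> {a..u}" for s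
  proof -
    have "norm (F (?e s *\<^sub>R Y s) - F (?e s *\<^sub>R Z s)) \<le> K * norm (?e s *\<^sub>R Y s - ?e s *\<^sub>R Z s)"
      by (rule lipschitz_on_normD[OF lip]) auto
    also have "\<dots> = K * (?e s * norm (Y s - Z s))"
      unfolding scaleR_diff_right[symmetric] by simp
    also have "\<dots> \<le> K * (?e s * d)"
      using close[OF that] \<open>0 \<le> K\<close> by (intro mult_left_mono) auto
    finally show ?thesis by (simp add: mult_ac)
  qed
  then have "norm (integral {a..u} (\<lambda>s. F (?e s *\<^sub>R Y s) - F (?e s *\<^sub>R Z s))) \<le> K * d * ?e u / L"
    using cont_F[OF cont(1)] cont_F[OF cont(2)]
    by (intro norm_integral_exp_bound[OF L(1) \<open>a \<le> u\<close>] continuous_on_diff)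
  also have "\<dots> \<le> d / 2 * ?e u"
  proof -
    have "K * d / L \<le> d / 2"
      using mult_right_mono[OF L(2) \<open>0 \<le> d\<close>] L(1) by (simp add: field_simps)
    from mult_right_mono[OF this, of "?e u"] show ?thesis by simp
  qed
  finally show ?thesis by (simp add: pos_divide_le_eq)
qed

lemma bielecki_picard_contraction:
  fixes F :: "'a::banach \<Rightarrow> 'a"
  assumes "a \<le> b" and lip: "K-lipschitz_on UNIV F" and L: "0 < L" "2 * K \<le> L"
  shows "dist (bielecki_picard L a b F x0 Y) (bielecki_picard L a b F x0 Z) \<le> 1/2 * dist Y Z"
proof (rule dist_bound)
  fix t
  define u where "u = clamp a b t"
  have u: "u \<in> {a..b}" using clamp_real(1)[OF \<open>a \<le> b\<close>] by (simp add: u_def)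
  let ?e = "\<lambda>s. exp (L * (s - a))"
  have cont: "continuous_on {a..u} (\<lambda>s. F (?e s *\<^sub>R V s))" for V :: "real \<Rightarrow>\<^sub>C 'a"
    by (rule continuous_on_compose2[OF lipschitz_on_continuous_on[OF lip] _ subset_UNIV])
      (auto intro!: continuous_intros)
  have "bielecki_picard L a b F x0 Y t - bielecki_picard L a b F x0 Z t
      = integral {a..u} (\<lambda>s. F (?e s *\<^sub>R Y s) - F (?e s *\<^sub>R Z s)) /\<^sub>R ?e u"
    using cont[of Y] cont[of Z]
    by (simp add: bielecki_picard_apply[OF lip] u_def[symmetric] integral_diff
        integrable_continuous_real scaleR_diff_right[symmetric])
  moreover have "norm (integral {a..u} (\<lambda>s. F (?e s *\<^sub>R Y s) - F (?e s *\<^sub>R Z s))) / ?e u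
      \<le> dist Y Z / 2"
    using u dist_bounded[of Y _ Z]
    by (intro bielecki_integral_estimate[OF lip L]) (auto simp: dist_norm)
  ultimately show "dist (bielecki_picard L a b F x0 Y t) (bielecki_picard L a b F x0 Z t)
      \<le> 1/2 * dist Y Z"
    by (simp add: dist_norm field_simps)
qed

lemma bielecki_picard_initial_value:
  fixes F :: "'a::banach \<Rightarrow> 'a"
  assumes "a \<le> b" and lip: "K-lipschitz_on UNIV F" and "0 \<le> L"
  shows "dist (bielecki_picard L a b F x0 Y) (bielecki_picard L a b F y0 Y) \<le> dist x0 y0"
proof (rule dist_bound)
  fix t
  define u where "u = clamp a b t"
  have "a \<le> u" using clamp_real(1)[OF \<open>a \<le> b\<close>] by (simp add: u_def)
  then have "inverse (exp (L * (u - a))) \<le> 1"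
    using \<open>0 \<le> L\<close> by (simp add: inverse_le_1_iff)
  then have "inverse (exp (L * (u - a))) * norm (x0 - y0) \<le> norm (x0 - y0)"
    by (intro mult_left_le_one_le) auto
  then show "dist (bielecki_picard L a b F x0 Y t) (bielecki_picard L a b F y0 Y t) \<le> dist x0 y0"
    unfolding bielecki_picard_apply[OF lip] dist_norm scaleR_diff_right[symmetric] u_def[symmetric]
    by simp
qed

lemma bielecki_picard_fixpoint:
  fixes F :: "'a::banach \<Rightarrow> 'a"
  assumes "a \<le> b" and lip: "K-lipschitz_on UNIV F" and L: "0 < L" "2 * K \<le> L"
  obtains Y where "\<And>x0. bielecki_picard L a b F x0 (Y x0) = Y x0"
    "\<And>x0 y0. dist (Y x0) (Y y0) \<le> 2 * dist x0 y0"
proof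
  let ?\<Phi> = "bielecki_picard L a b F"
  define Y where "Y x0 = (THE Y. ?\<Phi> x0 Y = Y)" for x0
  show fixed: "?\<Phi> x0 (Y x0) = Y x0" for x0
  proof -
    have "\<exists>!Y. ?\<Phi> x0 Y = Y"
      using bielecki_picard_contraction[OF assms] by (intro banach_fix_type[of "1/2"]) auto
    then show ?thesis unfolding Y_def by (rule theI')
  qed
  show "dist (Y x0) (Y y0) \<le> 2 * dist x0 y0" for x0 y0
    using fixpoint_dist_le[of "?\<Phi> x0" "Y x0" "?\<Phi> y0" "Y y0", OF fixed fixed
        bielecki_picard_contraction[OF assms]]
      bielecki_picard_initial_value[OF \<open>a \<le> b\<close> lip, of L x0 "Y x0" y0] L(1) by simp
qed

lemma integral_equation_has_vector_derivative:
  fixes f :: "real \<Rightarrow> 'a::banach"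
  assumes "continuous_on {a..b} f" "t \<in> {a..b}"
    and X: "\<And>s. s \<in> {a..b} \<Longrightarrow> X s = x0 + integral {a..s} f"
  shows "(X has_vector_derivative f t) (at t within {a..b})"
proof -
  have "((\<lambda>s. integral {a..s} f + x0) has_vector_derivative f t) (at t within {a..b})"
    unfolding has_vector_derivative_add_const by (rule integral_has_vector_derivative[OF assms(1,2)])
  then show ?thesis
    by (rule has_vector_derivative_transform_within[where d = 1]) (use assms(2) X in auto)
qed

lemma lipschitz_flow_exists:
  fixes F :: "'a::banach \<Rightarrow> 'a"
  assumes "a \<le> b" and lip: "K-lipschitz_on UNIV F"
  obtains X :: "'a \<Rightarrow> real \<Rightarrow> 'a" where
    "\<And>x0. X x0 a = x0"
    "\<And>x0 t. t \<in> {a..b} \<Longrightarrow> (X x0 has_vector_derivative F (X x0 t)) (at t within {a..b})"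
    "\<And>t. t \<in> {a..b} \<Longrightarrow> continuous_on UNIV (\<lambda>x0. X x0 t)"
proof -
  define L where "L = 2 * K + 1"
  have L: "0 < L" "2 * K \<le> L" using lipschitz_on_nonneg[OF lip] by (auto simp: L_def)
  define e where "e t = exp (L * (t - a))" for t
  have e_pos: "0 < e t" for t by (simp add: e_def)
  obtain Y where fixed: "\<And>x0. bielecki_picard L a b F x0 (Y x0) = Y x0"
    and Y_lipschitz: "\<And>x0 y0. dist (Y x0) (Y y0) \<le> 2 * dist x0 y0"
    using bielecki_picard_fixpoint[OF \<open>a \<le> b\<close> lip L] by blast
  define X where "X x0 t = e t *\<^sub>R Y x0 t" for x0 t
  have X_eq: "X x0 t = x0 + integral {a..t} (\<lambda>s. F (X x0 s))" if "t \<in> {a..b}" for x0 t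
    using bielecki_picard_apply[OF lip, of L a b x0 "Y x0" t] fixed[of x0] e_pos[of t]
      clamp_real(2)[OF \<open>a \<le> b\<close> that] by (simp add: X_def e_def)
  have "continuous_on {a..b} (\<lambda>s. F (X x0 s))" for x0
    by (rule continuous_on_compose2[OF lipschitz_on_continuous_on[OF lip] _ subset_UNIV])
      (auto simp: X_def e_def intro!: continuous_intros)
  then have "(X x0 has_vector_derivative F (X x0 t)) (at t within {a..b})" if "t \<in> {a..b}" for x0 t
    by (rule integral_equation_has_vector_derivative[OF _ that X_eq])
  moreover have "X x0 a = x0" for x0
    using X_eq[of a] \<open>a \<le> b\<close> by simp
  moreover have "continuous_on UNIV (\<lambda>x0. X x0 t)" for t
  proof (rule lipschitz_on_continuous_on)
    show "(2 * e t)-lipschitz_on UNIV (\<lambda>x0. X x0 t)"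
    proof (rule lipschitz_onI)
      fix x0 y0 :: 'a
      have "dist (X x0 t) (X y0 t) = e t * dist (Y x0 t) (Y y0 t)"
        using e_pos[of t] by (simp add: X_def dist_norm scaleR_diff_right[symmetric])
      also have "\<dots> \<le> e t * (2 * dist x0 y0)"
        using e_pos[of t] order_trans[OF dist_bounded Y_lipschitz] by (intro mult_left_mono) auto
      finally show "dist (X x0 t) (X y0 t) \<le> 2 * e t * dist x0 y0"
        by simp
    qed (use e_pos[of t] in simp)
  qed
  ultimately show thesis using that by blast
qed

section \<open>The boundary value problem\<close>

locale bounded_damping =
  fixes \<delta> :: "real \<Rightarrow> real" and M :: real
  assumes damping_continuous: "continuous_on {0<..} \<delta>"
    and damping_nonneg: "\<And>x. 0 < x \<Longrightarrow> 0 \<le> \<delta> x"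
    and damping_le: "\<And>x. 0 < x \<Longrightarrow> \<delta> x \<le> M"
begin

lemma damping_bound_nonneg: "0 \<le> M"
  using damping_nonneg[of 1] damping_le[of 1] by simp

definition damping_integral :: "real \<Rightarrow> real \<Rightarrow> real" where
  "damping_integral c x = integral {c..x} \<delta>"

lemma damping_integrable: "0 < a \<Longrightarrow> \<delta> integrable_on {a..b}"
  by (intro integrable_continuous_real continuous_on_subset[OF damping_continuous]) auto

lemma damping_integral_has_derivative:
  assumes "0 < c" "c < x"
  shows "(damping_integral c has_real_derivative \<delta> x) (at x)"
proof -
  have "(damping_integral c has_real_derivative \<delta> x) (at x within {c..x + 1})"
    unfolding damping_integral_def using assms
    by (intro integral_has_real_derivative continuous_on_subset[OF damping_continuous]) auto
  then show ?thesis using at_within_Icc_at[of c x "x + 1"] assms(2) by simp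
qed

lemma damping_integral_diff:
  assumes "0 < c" "c \<le> x" "x \<le> y"
  shows "damping_integral c y - damping_integral c x = integral {x..y} \<delta>"
  using Henstock_Kurzweil_Integration.integral_combine[OF assms(2,3) damping_integrable[OF assms(1)]]
  by (simp add: damping_integral_def)

lemma damping_integral_mono:
  assumes "0 < c" "c \<le> x" "x \<le> y"
  shows "damping_integral c x \<le> damping_integral c y"
  using damping_integral_diff[OF assms] integral_nonneg[OF damping_integrable[of x y]]
    damping_nonneg assms by force

lemma damping_integral_increment_le:
  assumes "0 < c" "c \<le> x" "x \<le> y"
  shows "damping_integral c y - damping_integral c x \<le> M * (y - x)"
proof -
  have "integral {x..y} \<delta> \<le> integral {x..y} (\<lambda>_. M)"
    using assms damping_le by (intro integral_le damping_integrable) auto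
  with damping_integral_diff[OF assms] assms(3) show ?thesis by (simp add: mult.commute)
qed

lemma bvp_solution_pos_lower_bound:
  assumes "bvp_solution \<delta> T rA rB r"
  obtains c where "0 < c" "\<And>t. t \<in> {-T..0} \<Longrightarrow> c < r t"
proof -
  obtain r' where "\<And>t. t \<in> {-T..0} \<Longrightarrow> (r has_real_derivative r' t) (at t within {-T..0})"
    using assms unfolding bvp_solution_def by metis
  then have "continuous_on {-T..0} r" by (rule DERIV_continuous_on)
  with assms show thesis
    using continuous_on_compact_pos_lower_bound[of "{-T..0}" r] that
    unfolding bvp_solution_def by auto
qed

lemma bvp_solution_momentum:
  assumes sol: "bvp_solution \<delta> T rA rB r" and "0 < c" and above: "\<And>t. t \<in> {-T..0} \<Longrightarrow> c < r t"
  obtains r' where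
    "\<And>t. t \<in> {-T..0} \<Longrightarrow> (r has_real_derivative r' t) (at t within {-T..0})"
    "\<And>t. t \<in> {-T..0} \<Longrightarrow> ((\<lambda>t. r' t + damping_integral c (r t)) has_real_derivative
       - 1 / (r t)\<^sup>2) (at t within {-T..0})"
proof -
  obtain r' r'' where d: "\<And>t. t \<in> {-T..0} \<Longrightarrow> (r has_real_derivative r' t) (at t within {-T..0})"
    and d': "\<And>t. t \<in> {-T..0} \<Longrightarrow> (r' has_real_derivative r'' t) (at t within {-T..0})"
    and ode: "\<And>t. t \<in> {-T..0} \<Longrightarrow> r'' t + \<delta> (r t) * r' t = - 1 / (r t)\<^sup>2"
    using sol unfolding bvp_solution_def by metis
  have "((\<lambda>t. r' t + damping_integral c (r t)) has_real_derivative - 1 / (r t)\<^sup>2)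
      (at t within {-T..0})" if "t \<in> {-T..0}" for t
  proof -
    have "((\<lambda>t. r' t + damping_integral c (r t)) has_real_derivative r'' t + \<delta> (r t) * r' t)
        (at t within {-T..0})"
      using \<open>0 < c\<close> above[OF that]
      by (intro DERIV_add d'[OF that] DERIV_chain2[OF damping_integral_has_derivative d[OF that]])
    with ode[OF that] show ?thesis by simp
  qed
  with d show thesis by (rule that)
qed

lemma bvp_solution_le:
  assumes sol1: "bvp_solution \<delta> T rA rB r1" and sol2: "bvp_solution \<delta> T rA rB r2"
    and "t \<in> {-T..0}"
  shows "r1 t \<le> r2 t"
proof -
  obtain c1 c2 where "0 < c1" "\<And>t. t \<in> {-T..0} \<Longrightarrow> c1 < r1 t"
    and "0 < c2" "\<And>t. t \<in> {-T..0} \<Longrightarrow> c2 < r2 t"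
    using bvp_solution_pos_lower_bound[OF sol1] bvp_solution_pos_lower_bound[OF sol2] by metis
  then obtain c where "0 < c" and c: "\<And>t. t \<in> {-T..0} \<Longrightarrow> c < r1 t \<and> c < r2 t"
    by (metis min_less_iff_conj min_def)
  obtain r1' where d1: "\<And>t. t \<in> {-T..0} \<Longrightarrow> (r1 has_real_derivative r1' t) (at t within {-T..0})"
    and p1: "\<And>t. t \<in> {-T..0} \<Longrightarrow> ((\<lambda>t. r1' t + damping_integral c (r1 t)) has_real_derivative
      - 1 / (r1 t)\<^sup>2) (at t within {-T..0})"
    using bvp_solution_momentum[OF sol1 \<open>0 < c\<close>] c by metis
  obtain r2' where d2: "\<And>t. t \<in> {-T..0} \<Longrightarrow> (r2 has_real_derivative r2' t) (at t within {-T..0})"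
    and p2: "\<And>t. t \<in> {-T..0} \<Longrightarrow> ((\<lambda>t. r2' t + damping_integral c (r2 t)) has_real_derivative
      - 1 / (r2 t)\<^sup>2) (at t within {-T..0})"
    using bvp_solution_momentum[OF sol2 \<open>0 < c\<close>] c by metis
  have bc: "r1 (-T) = r2 (-T)" "r1 0 = r2 0"
    using sol1 sol2 by (simp_all add: bvp_solution_def)
  define D where "D = damping_integral c"
  define w where "w t = r1 t - r2 t" for t
  define q where "q t = D (r1 t) - D (r2 t)" for t
  define u where "u t = (r1' t + D (r1 t)) - (r2' t + D (r2 t))" for t
  define u' where "u' t = 1 / (r2 t)\<^sup>2 - 1 / (r1 t)\<^sup>2" for t
  have dw: "(w has_real_derivative u t - q t) (at t within {-T..0})" if "t \<in> {-T..0}" for t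
    unfolding w_def using DERIV_diff[OF d1[OF that] d2[OF that]] by (simp add: u_def q_def)
  have du: "(u has_real_derivative u' t) (at t within {-T..0})" if "t \<in> {-T..0}" for t
    unfolding u_def u'_def D_def using DERIV_diff[OF p1[OF that] p2[OF that]] by simp
  have "w t \<le> 0"
  proof (rule comparison_nonpos[OF dw du, of M])
    show "0 \<le> q x \<and> q x \<le> M * w x \<and> 0 \<le> u' x" if "x \<in> {-T..0}" "0 < w x" for x
    proof -
      have "c < r2 x" "r2 x < r1 x" using that c[of x] by (auto simp: w_def)
      then have "1 / (r1 x)\<^sup>2 \<le> 1 / (r2 x)\<^sup>2" "D (r2 x) \<le> D (r1 x)"
        "D (r1 x) - D (r2 x) \<le> M * (r1 x - r2 x)"
        using \<open>0 < c\<close> unfolding D_def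
        by (auto intro!: divide_left_mono power_mono damping_integral_mono damping_integral_increment_le)
      then show ?thesis by (simp add: q_def w_def u'_def)
    qed
  qed (use bc \<open>t \<in> {-T..0}\<close> in \<open>auto simp: w_def\<close>)
  then show ?thesis by (simp add: w_def)
qed

lemma damping_integral_max_lipschitz:
  assumes "0 < c" "c \<le> m"
  shows "\<bar>damping_integral c (max m x) - damping_integral c (max m y)\<bar> \<le> M * \<bar>x - y\<bar>"
proof -
  have "\<bar>damping_integral c (max m x) - damping_integral c (max m y)\<bar> \<le> M * \<bar>x - y\<bar>"
    if "x \<le> y" for x y
    using that assms damping_integral_mono[of c "max m x" "max m y"]
      damping_integral_increment_le[of c "max m x" "max m y"] damping_bound_nonneg
    by (auto simp: max_def mult_left_mono intro: order_trans)
  from this[of x y] this[of y x] show ?thesis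
    by (cases "x \<le> y") (auto simp: abs_minus_commute)
qed

definition truncated_field :: "real \<Rightarrow> real \<Rightarrow> real \<times> real \<Rightarrow> real \<times> real" where
  "truncated_field c m z =
     (snd z - damping_integral c (max m (fst z)), - 1 / (max m (fst z))\<^sup>2)"

definition truncated_solution ::
  "real \<Rightarrow> real \<Rightarrow> real \<Rightarrow> (real \<Rightarrow> real) \<Rightarrow> (real \<Rightarrow> real) \<Rightarrow> bool" where
  "truncated_solution c m T r p \<longleftrightarrow> (\<forall>t\<in>{-T..0}.
     (r has_real_derivative fst (truncated_field c m (r t, p t))) (at t within {-T..0}) \<and>
     (p has_real_derivative snd (truncated_field c m (r t, p t))) (at t within {-T..0}))"

lemma truncated_field_lipschitz:
  assumes "0 < c" "c \<le> m"
  shows "(1 + M + 2 / m ^ 3)-lipschitz_on UNIV (truncated_field c m)"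
proof (rule lipschitz_onI)
  fix z z' :: "real \<times> real"
  have norm_le: "norm d \<le> \<bar>fst d\<bar> + \<bar>snd d\<bar>" for d :: "real \<times> real"
    using norm_Pair_le[of "fst d" "snd d"] by simp
  have "dist (truncated_field c m z) (truncated_field c m z')
      \<le> \<bar>fst (truncated_field c m z) - fst (truncated_field c m z')\<bar>
        + \<bar>snd (truncated_field c m z) - snd (truncated_field c m z')\<bar>"
    using norm_le[of "truncated_field c m z - truncated_field c m z'"] by (simp add: dist_norm)
  also have "\<dots> \<le> (\<bar>snd z - snd z'\<bar> + M * \<bar>fst z - fst z'\<bar>) + 2 / m ^ 3 * \<bar>fst z - fst z'\<bar>"
  proof (rule add_mono)
    show "\<bar>fst (truncated_field c m z) - fst (truncated_field c m z')\<bar>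
        \<le> \<bar>snd z - snd z'\<bar> + M * \<bar>fst z - fst z'\<bar>"
      using damping_integral_max_lipschitz[OF assms, of "fst z" "fst z'"]
      by (simp add: truncated_field_def) linarith
    show "\<bar>snd (truncated_field c m z) - snd (truncated_field c m z')\<bar> \<le> 2 / m ^ 3 * \<bar>fst z - fst z'\<bar>"
      using inverse_square_max_lipschitz[of m "fst z'" "fst z"] assms
      by (simp add: truncated_field_def abs_minus_commute)
  qed
  also have "\<dots> \<le> (1 + M + 2 / m ^ 3) * dist z z'"
  proof -
    have "\<bar>fst z - fst z'\<bar> \<le> dist z z'" "\<bar>snd z - snd z'\<bar> \<le> dist z z'"
      using dist_fst_le[of z z'] dist_snd_le[of z z'] by (simp_all add: dist_real_def)
    moreover have "0 \<le> 2 / m ^ 3" using assms by simp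
    ultimately have "(\<bar>snd z - snd z'\<bar> + M * \<bar>fst z - fst z'\<bar>) + 2 / m ^ 3 * \<bar>fst z - fst z'\<bar>
        \<le> (dist z z' + M * dist z z') + 2 / m ^ 3 * dist z z'"
      using damping_bound_nonneg by (intro add_mono mult_left_mono) auto
    then show ?thesis by (simp add: algebra_simps)
  qed
  finally show "dist (truncated_field c m z) (truncated_field c m z') \<le> (1 + M + 2 / m ^ 3) * dist z z'" .
qed (use damping_bound_nonneg assms in simp)

lemma truncated_solutionD:
  assumes "truncated_solution c m T r p" "t \<in> {-T..0}"
  shows "(r has_real_derivative p t - damping_integral c (max m (r t))) (at t within {-T..0})"
    and "(p has_real_derivative - 1 / (max m (r t))\<^sup>2) (at t within {-T..0})"
  using assms by (auto simp: truncated_solution_def truncated_field_def)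

lemma truncated_momentum_bounds:
  assumes sol: "truncated_solution c m T r p" and "0 < m" "x \<in> {-T..0}" "y \<in> {-T..0}" "x \<le> y"
  shows "p x - (y - x) / m\<^sup>2 \<le> p y" and "p y \<le> p x"
proof -
  have deriv: "(p has_real_derivative - 1 / (max m (r t))\<^sup>2) (at t within {x..y})" if "t \<in> {x..y}" for t
    using assms(3,4) that by (intro DERIV_subset[OF truncated_solutionD(2)[OF sol]]) auto
  have "1 / (max m (r t))\<^sup>2 \<le> 1 / m\<^sup>2" for t
    using \<open>0 < m\<close> by (intro divide_left_mono power_mono) auto
  then have "- 1 / m\<^sup>2 * (y - x) \<le> p y - p x"
    by (intro increment_ge_of_deriv_ge[OF \<open>x \<le> y\<close> deriv]) auto
  then show "p x - (y - x) / m\<^sup>2 \<le> p y" by simp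
  have "p y - p x \<le> 0 * (y - x)"
    by (intro increment_le_of_deriv_le[OF \<open>x \<le> y\<close> deriv]) auto
  then show "p y \<le> p x" by simp
qed

lemma truncated_solution_ge_min:
  assumes sol: "truncated_solution c m T r p" and "0 < c" "c \<le> m" "t \<in> {-T..0}"
  shows "min (r (-T)) (r 0) \<le> r t"
proof (rule min_at_endpoint[where h = "\<lambda>x. damping_integral c (max m x)" and p = p
      and r = r and s = "-T" and t = 0])
  show "mono (\<lambda>x. damping_integral c (max m x))"
    using assms(2,3) by (intro monoI damping_integral_mono) auto
  show "p y \<le> p x" if "x \<in> {-T..0}" "y \<in> {-T..0}" "x \<le> y" for x y
    using truncated_momentum_bounds(2)[OF sol _ that] assms(2,3) by simp
qed (use assms truncated_solutionD(1)[OF sol] in auto)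

lemma truncated_endpoint_le:
  assumes sol: "truncated_solution c m T r p" and "0 < c" "c \<le> m" "0 \<le> T"
  shows "r 0 \<le> r (-T) + T * (p (-T) - damping_integral c m)"
proof -
  have "r 0 - r (-T) \<le> (p (-T) - damping_integral c m) * (0 - - T)"
  proof (rule increment_le_of_deriv_le)
    show "p x - damping_integral c (max m (r x)) \<le> p (-T) - damping_integral c m"
      if "x \<in> {-T<..<0}" for x
      using truncated_momentum_bounds(2)[OF sol, of "-T" x] damping_integral_mono[of c m "max m (r x)"]
        assms that by auto
  qed (use assms truncated_solutionD(1)[OF sol] in auto)
  then show ?thesis by (simp add: mult.commute)
qed

lemma truncated_endpoint_ge:
  assumes sol: "truncated_solution c m T r p" and "0 < c" "c \<le> m" "0 < T" "r (-T) \<le> R"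
    and large: "T / m\<^sup>2 + damping_integral c (max m R) + (R - r (-T)) / T \<le> p (-T)"
  shows "R \<le> r 0"
proof -
  define k where "k = p (-T) - T / m\<^sup>2 - damping_integral c (max m R)"
  have "(R - r (-T)) / T \<le> k" using large by (simp add: k_def)
  moreover have "0 \<le> (R - r (-T)) / T" using assms(4,5) by simp
  ultimately have "R - r (-T) \<le> k * T" "0 \<le> k"
    using \<open>0 < T\<close> by (simp add: pos_divide_le_eq, linarith)
  have "min R (r (-T) + k * (0 - - T)) \<le> r 0"
  proof (rule min_or_linear_growth)
    show "k \<le> p x - damping_integral c (max m (r x))" if "x \<in> {-T<..<0}" "r x < R" for x
    proof -
      have "p (-T) - (x - - T) / m\<^sup>2 \<le> p x"
        using truncated_momentum_bounds(1)[OF sol, of "-T" x] assms that by auto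
      moreover have "(x - - T) / m\<^sup>2 \<le> T / m\<^sup>2"
        using that by (intro divide_right_mono) auto
      moreover have "damping_integral c (max m (r x)) \<le> damping_integral c (max m R)"
        using that assms by (intro damping_integral_mono) auto
      ultimately show ?thesis by (simp add: k_def)
    qed
  qed (use assms \<open>0 \<le> k\<close> truncated_solutionD(1)[OF sol] in auto)
  with \<open>R - r (-T) \<le> k * T\<close> show ?thesis by simp
qed

lemma truncated_shooting:
  assumes "0 < c" "c \<le> m" "0 < T"
  obtains r p where "truncated_solution c m T r p" "r (-T) = rA" "r 0 = rB"
proof -
  obtain X where X_init: "\<And>z. X z (-T) = z"
    and X_deriv: "\<And>z t. t \<in> {-T..0} \<Longrightarrow>
      (X z has_vector_derivative truncated_field c m (X z t)) (at t within {-T..0})"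
    and X_cont: "\<And>t. t \<in> {-T..0} \<Longrightarrow> continuous_on UNIV (\<lambda>z. X z t)"
    using lipschitz_flow_exists[OF _ truncated_field_lipschitz[OF assms(1,2)], of "-T" 0] \<open>0 < T\<close>
    by auto
  define R where "R v t = fst (X (rA, v) t)" for v t
  define P where "P v t = snd (X (rA, v) t)" for v t
  have sol: "truncated_solution c m T (R v) (P v)" for v
    unfolding truncated_solution_def R_def P_def has_real_derivative_iff_has_vector_derivative
    using bounded_linear.has_vector_derivative[OF bounded_linear_fst X_deriv]
      bounded_linear.has_vector_derivative[OF bounded_linear_snd X_deriv] by simp
  have init: "R v (-T) = rA" "P v (-T) = v" for v by (simp_all add: R_def P_def X_init)
  have "continuous_on UNIV (\<lambda>v. R v 0)"
    unfolding R_def using \<open>0 < T\<close>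
    by (intro continuous_on_fst continuous_on_compose2[OF X_cont[of 0]] continuous_intros) auto
  (* v_lo makes the bound of truncated_endpoint_le equal to rB;
     v_hi is large enough for truncated_endpoint_ge with R = max rA rB. *)
  define v_lo where "v_lo = damping_integral c m + (rB - rA) / T"
  define R_hi where "R_hi = max rA rB"
  define v_hi where "v_hi = max v_lo (T / m\<^sup>2 + damping_integral c (max m R_hi) + (R_hi - rA) / T)"
  have "R v_lo 0 \<le> rA + T * (v_lo - damping_integral c m)"
    using truncated_endpoint_le[OF sol assms(1,2), of v_lo] init \<open>0 < T\<close> by simp
  also have "\<dots> = rB" using \<open>0 < T\<close> by (simp add: v_lo_def)
  finally have "R v_lo 0 \<le> rB" .
  moreover have "rB \<le> R v_hi 0"
    using truncated_endpoint_ge[OF sol assms(1,2,3), of v_hi R_hi] init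
    by (simp add: v_hi_def R_hi_def)
  ultimately obtain v where "R v 0 = rB"
    using IVT'[of "\<lambda>v. R v 0" v_lo rB v_hi] continuous_on_subset[OF \<open>continuous_on UNIV _\<close>]
    by (auto simp: v_hi_def)
  with sol init show thesis by (intro that[of "R v" "P v"]) auto
qed

lemma bvp_solution_exists:
  assumes "0 < rA" "0 < rB" "0 < T"
  shows "\<exists>r. bvp_solution \<delta> T rA rB r"
proof -
  define m c where "m = min rA rB" and "c = m / 2"
  have "0 < c" "c < m" using assms by (auto simp: m_def c_def)
  obtain r p where sol: "truncated_solution c m T r p" and bc: "r (-T) = rA" "r 0 = rB"
    using truncated_shooting[OF \<open>0 < c\<close> less_imp_le[OF \<open>c < m\<close>] \<open>0 < T\<close>] by blast
  have r_ge: "m \<le> r t" if "t \<in> {-T..0}" for t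
    using truncated_solution_ge_min[OF sol \<open>0 < c\<close> _ that] \<open>c < m\<close> bc by (simp add: m_def)
  define r' where "r' t = p t - damping_integral c (r t)" for t
  have ode: "(r has_real_derivative r' t) (at t within {-T..0}) \<and>
      (r' has_real_derivative - 1 / (r t)\<^sup>2 - \<delta> (r t) * r' t) (at t within {-T..0}) \<and>
      (- 1 / (r t)\<^sup>2 - \<delta> (r t) * r' t) + \<delta> (r t) * r' t = - 1 / (r t)\<^sup>2"
    if t: "t \<in> {-T..0}" for t
  proof -
    have "max m (r t) = r t" using r_ge[OF t] by simp
    then have dr: "(r has_real_derivative r' t) (at t within {-T..0})"
      and dp: "(p has_real_derivative - 1 / (r t)\<^sup>2) (at t within {-T..0})"
      using truncated_solutionD[OF sol t] by (simp_all add: r'_def)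
    have "((\<lambda>t. damping_integral c (r t)) has_real_derivative \<delta> (r t) * r' t) (at t within {-T..0})"
      using r_ge[OF t] \<open>c < m\<close> \<open>0 < c\<close>
      by (intro DERIV_chain2[OF damping_integral_has_derivative dr]) auto
    from DERIV_diff[OF dp this] dr show ?thesis
      unfolding r'_def[abs_def] by simp
  qed
  have "0 < r t" if "t \<in> {-T..0}" for t
    using r_ge[OF that] \<open>0 < c\<close> \<open>c < m\<close> by simp
  with bc ode have "bvp_solution \<delta> T rA rB r"
    unfolding bvp_solution_def
    by (intro conjI ballI exI[of _ r'] exI[of _ "\<lambda>t. - 1 / (r t)\<^sup>2 - \<delta> (r t) * r' t"]) auto
  then show ?thesis by blast
qed

end

theorem corollary3p3:
  fixes \<delta> :: "real \<Rightarrow> real"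
  assumes "\<delta> C1_differentiable_on {0<..}"
    and "\<And>x. x > 0 \<Longrightarrow> \<delta> x \<ge> 0"
    and "bounded (\<delta> ` {0<..})"
    and "rA > 0" and "rB > 0" and "T > 0"
  shows "\<exists>r. bvp_solution \<delta> T rA rB r \<and>
           (\<forall>s. bvp_solution \<delta> T rA rB s \<longrightarrow> (\<forall>t\<in>{-T..0}. s t = r t))"
proof -
  obtain B where "\<And>x. 0 < x \<Longrightarrow> \<delta> x \<le> B"
    using assms(3) by (auto simp: bounded_iff dest!: abs_le_D1)
  then interpret bounded_damping \<delta> B
    using C1_differentiable_imp_continuous_on[OF assms(1)] assms(2) by unfold_locales auto
  obtain r where "bvp_solution \<delta> T rA rB r"
    using bvp_solution_exists[OF assms(4-6)] by blast
  with bvp_solution_le show ?thesis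
    by (meson order.antisym)
qed

end
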